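(* There is a constant $\kappa_0>0$ such that $m(t,n)/n^q\le\kappa_0$ for all $t\in H$ and all $n\ge1$. Moreover, $$\frac1{n^p}\sum_{u\in H_n}\frac{m(u,n)}{n^q}\longrightarrow l\int_C\mathcal V(y)\,dy<\infty\qquad(n\to\infty).$$
   Context: $d=p+q$ with $p,q\ge1$. $K\le\mathbb{Z}^d$ is a subgroup of rank $q$ with basis $\bar v_1,\dots,\bar v_q$, $F\le\mathbb{Z}^d$ a subgroup of rank $p$ with basis $\bar u_1,\dots,\bar u_p$, $F\cap K=\{0\}$, and $G=F+K$ has finite index $l$ in $\mathbb{Z}^d$; $x_1,\dots,x_l$ are representatives of the cosets of $G$ in $\mathbb{Z}^d$. $H=\bigcup_{k=1}^l(x_k+F)$. For $u\in H$, $N(u)=\min\{\|u+v\|_\infty:v\in K\}$, and $H_n=\{u\in H:N(u)\le n\}$. $U$ ($d\times p$) has columns $\bar u_i$ and $V$ ($d\times q$) has columns $\bar v_j$. $C=\{y\in\mathbb{R}^p:\exists\lambda\in\mathbb{R}^q,\ \|Uy+V\lambda\|_\infty\le1\}$; for $y\in C$, $\mathcal V(y)$ is the $q$-dimensional volume of $P_y=\{\lambda\in\mathbb{R}^q:\|Uy+V\lambda\|_\infty\le1\}$. For $t\in\mathbb{Z}^d$ and $n\ge1$, $m(t,n)=\big|\{s\in\mathbb{Z}^d:\|s\|_\infty\le n\}\cap(t+K)\big|$. *)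

theory Defs
  imports "HOL-Analysis.Analysis"
begin

definition supn :: "int ^ 'd::finite \<Rightarrow> nat" where
  "supn s = Max (range (\<lambda>i. nat \<bar>s $ i\<bar>))"

definition zspan :: "('i::finite \<Rightarrow> int ^ 'd::finite) \<Rightarrow> (int ^ 'd) set" where
  "zspan w = {\<Sum>i\<in>UNIV. c i *s w i | c. True}"

definition zindep :: "('i::finite \<Rightarrow> int ^ 'd::finite) \<Rightarrow> bool" where
  "zindep w \<longleftrightarrow> (\<forall>c. (\<Sum>i\<in>UNIV. c i *s w i) = 0 \<longrightarrow> (\<forall>i. c i = 0))"

definition Nfun :: "(int ^ 'd::finite) set \<Rightarrow> int ^ 'd \<Rightarrow> nat" where
  "Nfun K u = (LEAST k. \<exists>v\<in>K. supn (u + v) = k)"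

definition mcount :: "(int ^ 'd::finite) set \<Rightarrow> int ^ 'd \<Rightarrow> nat \<Rightarrow> nat" where
  "mcount K t n = card ({s. supn s \<le> n} \<inter> (\<lambda>v. t + v) ` K)"

definition colmat :: "('i::finite \<Rightarrow> int ^ 'd::finite) \<Rightarrow> real ^ 'i ^ 'd" where
  "colmat w = (\<chi> r c. real_of_int (w c $ r))"

definition Pset :: "real ^ 'p::finite ^ 'd::finite \<Rightarrow> real ^ 'q::finite ^ 'd \<Rightarrow> real ^ 'p \<Rightarrow> (real ^ 'q) set" where
  "Pset U V y = {lam. infnorm (U *v y + V *v lam) \<le> 1}"

definition Cset :: "real ^ 'p::finite ^ 'd::finite \<Rightarrow> real ^ 'q::finite ^ 'd \<Rightarrow> (real ^ 'p) set" where
  "Cset U V = {y. \<exists>lam. infnorm (U *v y + V *v lam) \<le> 1}"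

definition Vol :: "real ^ 'p::finite ^ 'd::finite \<Rightarrow> real ^ 'q::finite ^ 'd \<Rightarrow> real ^ 'p \<Rightarrow> ennreal" where
  "Vol U V y = emeasure lborel (Pset U V y)"

end

theory Submission
  imports Defs
begin

(*
  Write K = zspan v, F = zspan u and G = F + K, a subgroup of index l of Z^d with
  coset representatives x 1, ..., x l, and H = (UN k. x k + F).

  1. Counting.  Every s in Z^d decomposes uniquely as s = t + w with t in H and
     w in K.  Hence the box {s. ||s|| <= n} is the disjoint union of the slices
     counted by m(t,n), t in H_n; so the sum of m(t,n) over H_n is (2n+1)^d and
     the normalised sum of the theorem tends to 2^d.
  2. Bound.  The linear map L(y,lam) = U y + V lam from R^p x R^q to R^d is onto,
     since every integer vector has a nonzero multiple in G = L(Z^p x Z^q), hence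
     bijective as p + q = d.  Its bounded inverse bounds the v-coordinates of the
     differences of points of a slice by a multiple of n, so m(t,n) <= kappa0 n^q.
  3. Measure.  By Fubini the integral of V over C is the volume of L^-1 [-1,1]^d.
     The unit cube of R^p x R^q is tiled by the pieces that L maps into the cell
     (x k + g) + [0,1)^d, g in G; moving the pieces by lattice vectors shows that
     l * vol(L^-1 [0,1)^d) = 1.  As [-1,1)^d consists of 2^d cells, the integral
     equals 2^d / l, and l times it is the limit 2^d of part 1.
*)

lemma zspan_sum: "(\<Sum>i\<in>UNIV. c i *s w i) \<in> zspan w"
  unfolding zspan_def by blast

lemma zspan_0: "0 \<in> zspan w"
  unfolding zspan_def by (auto intro!: exI[of _ "\<lambda>_. 0"])

lemma zspan_add: "a \<in> zspan w \<Longrightarrow> b \<in> zspan w \<Longrightarrow> a + b \<in> zspan w"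
  unfolding zspan_def
proof clarify
  fix c d
  show "\<exists>e. (\<Sum>i\<in>UNIV. c i *s w i) + (\<Sum>i\<in>UNIV. d i *s w i) = (\<Sum>i\<in>UNIV. e i *s w i) \<and> True"
    by (rule exI[of _ "\<lambda>i. c i + d i"]) (simp add: vec_eq_iff sum_component sum.distrib algebra_simps)
qed

lemma zspan_uminus: "a \<in> zspan w \<Longrightarrow> - a \<in> zspan w"
  unfolding zspan_def
proof clarify
  fix c
  show "\<exists>e. - (\<Sum>i\<in>UNIV. c i *s w i) = (\<Sum>i\<in>UNIV. e i *s w i) \<and> True"
    by (rule exI[of _ "\<lambda>i. - c i"]) (simp add: vec_eq_iff sum_component sum_negf)
qed

lemma zspan_diff: "a \<in> zspan w \<Longrightarrow> b \<in> zspan w \<Longrightarrow> a - b \<in> zspan w"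
  using zspan_add[of a w "-b"] zspan_uminus[of b w] by simp

lemma zindep_unique:
  assumes "zindep w" "(\<Sum>i\<in>UNIV. c i *s w i) = (\<Sum>i\<in>UNIV. d i *s w i)"
  shows "c = d"
proof -
  have "(\<Sum>i\<in>UNIV. (\<lambda>i. c i - d i) i *s w i) = 0"
    using assms(2) by (simp add: vec_eq_iff sum_component algebra_simps sum_subtractf)
  with assms(1) have "\<forall>i. c i - d i = 0" unfolding zindep_def
    by (drule_tac x="\<lambda>i. c i - d i" in spec) simp
  then show ?thesis by (auto simp: fun_eq_iff)
qed

lemma mem_transl:
  fixes K :: "'a::ab_group_add set"
  shows "s \<in> (\<lambda>w. t + w) ` K \<longleftrightarrow> s - t \<in> K"
  by (auto simp: image_iff intro: bexI[of _ "s - t"])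

lemma supn_le_iff: "supn s \<le> n \<longleftrightarrow> (\<forall>i. \<bar>s $ i\<bar> \<le> int n)"
  unfolding supn_def by (subst Max_le_iff) (auto, (metis nat_le_iff)+)

lemma card_vecset:
  assumes "finite A"
  shows "card {z::'a ^ 'n::finite. \<forall>i. z $ i \<in> A} = card A ^ CARD('n)"
proof -
  have "{z::'a ^ 'n::finite. \<forall>i. z $ i \<in> A} = vec_lambda ` (PiE UNIV (\<lambda>_. A))"
    apply (auto simp: image_iff PiE_iff)
    subgoal for x by (rule bexI[of _ "vec_nth x"]) auto
    done
  moreover have "inj_on vec_lambda (PiE UNIV (\<lambda>_::'n. A))"
    by (auto simp: inj_on_def vec_lambda_inject)
  ultimately show ?thesis using assms by (simp add: card_image card_PiE)
qed

lemma card_box: "card {s::int ^ 'd::finite. supn s \<le> n} = (2*n+1) ^ CARD('d)"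
proof -
  have "{s::int ^ 'd::finite. supn s \<le> n} = {z. \<forall>i. z $ i \<in> {-int n..int n}}"
    unfolding supn_le_iff atLeastAtMost_iff abs_le_iff by (metis minus_le_iff)
  moreover have "card {-int n..int n} = 2*n+1" by simp
  ultimately show ?thesis using card_vecset[of "{-int n..int n}", where 'n='d] by simp
qed

lemma finite_box: "finite {s::int ^ 'd::finite. supn s \<le> n}"
  by (rule card_ge_0_finite) (simp add: card_box)

section \<open>Slices of a box are small\<close>

lemma slice_in_coeff_box:
  fixes v :: "'q::finite \<Rightarrow> int ^ 'd::finite"
  assumes M: "\<forall>c n j. supn (\<Sum>j\<in>UNIV. c j *s v j) \<le> n \<longrightarrow> real_of_int \<bar>c j\<bar> \<le> M * real n"
    and s0: "s0 \<in> {s. supn s \<le> n} \<inter> (\<lambda>w. t + w) ` zspan v"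
  shows "{s. supn s \<le> n} \<inter> (\<lambda>w. t + w) ` zspan v
           \<subseteq> (\<lambda>c. s0 + (\<Sum>j\<in>UNIV. c j *s v j)) ` PiE UNIV (\<lambda>_. {-\<lfloor>M * (2 * n)\<rfloor>..\<lfloor>M * (2 * n)\<rfloor>})"
proof
  fix s assume s: "s \<in> {s. supn s \<le> n} \<inter> (\<lambda>w. t + w) ` zspan v"
  have "s - t \<in> zspan v" "s0 - t \<in> zspan v" using s s0 mem_transl by blast+
  from zspan_diff[OF this] obtain c where c: "s - s0 = (\<Sum>j\<in>UNIV. c j *s v j)"
    unfolding zspan_def by auto
  have "\<bar>(s - s0) $ i\<bar> \<le> int (2 * n)" for i
  proof -
    have "\<bar>s $ i\<bar> \<le> int n" "\<bar>s0 $ i\<bar> \<le> int n" using s s0 supn_le_iff by blast+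
    then show ?thesis by (simp; arith)
  qed
  then have "supn (\<Sum>j\<in>UNIV. c j *s v j) \<le> 2 * n" unfolding c[symmetric] supn_le_iff by blast
  then have "real_of_int \<bar>c j\<bar> \<le> M * real (2 * n)" for j using M by blast
  then have "c j \<le> \<lfloor>M * (2 * n)\<rfloor> \<and> - c j \<le> \<lfloor>M * (2 * n)\<rfloor>" for j
    by (simp add: le_floor_iff abs_le_iff)
  then have "c \<in> PiE UNIV (\<lambda>_. {-\<lfloor>M * (2 * n)\<rfloor>..\<lfloor>M * (2 * n)\<rfloor>})"
    by (simp add: PiE_UNIV_domain Pi_iff) (metis minus_le_iff)
  moreover have "s = s0 + (\<Sum>j\<in>UNIV. c j *s v j)" using c by (simp add: algebra_simps)
  ultimately show "s \<in> (\<lambda>c. s0 + (\<Sum>j\<in>UNIV. c j *s v j)) ` PiE UNIV (\<lambda>_. {-\<lfloor>M * (2 * n)\<rfloor>..\<lfloor>M * (2 * n)\<rfloor>})"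
    by blast
qed

lemma mcount_le:
  fixes v :: "'q::finite \<Rightarrow> int ^ 'd::finite"
  assumes M: "\<forall>c n j. supn (\<Sum>j\<in>UNIV. c j *s v j) \<le> n \<longrightarrow> real_of_int \<bar>c j\<bar> \<le> M * real n"
    and M0: "M \<ge> 0" and n: "n \<ge> 1"
  shows "real (mcount (zspan v) t n) \<le> ((4 * M + 1) * real n) ^ CARD('q)"
proof (cases "{s. supn s \<le> n} \<inter> (\<lambda>w. t + w) ` zspan v = {}")
  case True
  then show ?thesis using M0 by (simp add: mcount_def)
next
  case False
  then obtain s0 where s0: "s0 \<in> {s. supn s \<le> n} \<inter> (\<lambda>w. t + w) ` zspan v" by blast
  define N where "N = \<lfloor>M * (2 * n)\<rfloor>"
  have "{s. supn s \<le> n} \<inter> (\<lambda>w. t + w) ` zspan v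
          \<subseteq> (\<lambda>c. s0 + (\<Sum>j\<in>UNIV. c j *s v j)) ` PiE UNIV (\<lambda>_. {-N..N})"
    unfolding N_def using M s0 by (rule slice_in_coeff_box)
  then have "mcount (zspan v) t n \<le> card ((\<lambda>c. s0 + (\<Sum>j\<in>UNIV. c j *s v j)) ` PiE UNIV (\<lambda>_::'q. {-N..N}))"
    unfolding mcount_def by (rule card_mono[rotated]) (intro finite_imageI finite_PiE; simp)
  also have "\<dots> \<le> card (PiE (UNIV::'q set) (\<lambda>_. {-N..N}))" by (rule card_image_le) (auto intro: finite_PiE)
  also have "\<dots> = nat (2*N+1) ^ CARD('q)" by (simp add: card_PiE)
  finally have card: "real (mcount (zspan v) t n) \<le> real (nat (2*N+1)) ^ CARD('q)"
    by (metis of_nat_le_iff of_nat_power)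
  have "real_of_int N \<le> M * (2 * real n)" unfolding N_def by simp
  moreover have "N \<ge> 0" unfolding N_def using M0 by simp
  ultimately have "real (nat (2*N+1)) \<le> (4 * M + 1) * real n" using n by (simp add: algebra_simps)
  then show ?thesis using card by (meson of_nat_0_le_iff order_trans power_mono)
qed

definition rvec :: "int ^ 'n::finite \<Rightarrow> real ^ 'n" where
  "rvec z = (\<chi> i. real_of_int (z $ i))"

definition rfun :: "('i::finite \<Rightarrow> int) \<Rightarrow> real ^ 'i" where
  "rfun c = (\<chi> i. real_of_int (c i))"

lemma rvec_nth [simp]: "rvec z $ i = real_of_int (z $ i)"
  by (simp add: rvec_def)

lemma rfun_nth [simp]: "rfun c $ i = real_of_int (c i)"
  by (simp add: rfun_def)

lemma rvec_add: "rvec (a + b) = rvec a + rvec b"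
  by (simp add: vec_eq_iff)

lemma rvec_smult: "rvec (m *s a) = real_of_int m *\<^sub>R rvec a"
  by (simp add: vec_eq_iff)

lemma colmat_rfun: "colmat w *v rfun c = rvec (\<Sum>i\<in>UNIV. c i *s w i)"
  by (simp add: vec_eq_iff matrix_vector_mult_def colmat_def sum_component mult.commute)

lemma infnorm_le1_cart: "infnorm (w::real^'n::finite) \<le> 1 \<longleftrightarrow> (\<forall>i. \<bar>w $ i\<bar> \<le> 1)"
proof
  assume "infnorm w \<le> 1"
  then show "\<forall>i. \<bar>w $ i\<bar> \<le> 1" using component_le_infnorm_cart order_trans by blast
next
  assume "\<forall>i. \<bar>w $ i\<bar> \<le> 1"
  then show "infnorm w \<le> 1" unfolding infnorm_cart by (intro cSup_least) auto
qed

lemma lborel_transl: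
  fixes c :: "'a::euclidean_space"
  assumes A: "A \<in> sets borel"
  shows "emeasure lborel {e. c + e \<in> A} = emeasure lborel A"
proof -
  have "emeasure lborel A = emeasure (distr lborel borel ((+) c)) A" by (simp add: lborel_distr_plus)
  also have "\<dots> = emeasure lborel ((+) c -` A \<inter> space lborel)"
    by (rule emeasure_distr) (use A in auto)
  finally show ?thesis by (simp add: vimage_def)
qed

lemma transl_borel:
  fixes c :: "'a::euclidean_space"
  assumes A: "A \<in> sets borel"
  shows "{e. e - c \<in> A} \<in> sets borel"
proof -
  have "(\<lambda>e. e - c) \<in> borel_measurable borel"
    by (intro borel_measurable_continuous_onI continuous_intros)
  from measurable_sets_borel[OF this A] show ?thesis by (simp add: vimage_def)
qed

lemma null_level_set:
  fixes f :: "'a::euclidean_space \<Rightarrow> real"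
  assumes f: "linear f" and c: "c \<noteq> 0"
  shows "{e. f e = c} \<in> null_sets lborel"
proof -
  define a where "a = (\<Sum>b\<in>Basis. f b *\<^sub>R b)"
  have fa: "f e = a \<bullet> e" for e
  proof -
    have "f e = f (\<Sum>b\<in>Basis. (e \<bullet> b) *\<^sub>R b)" by (simp add: euclidean_representation)
    also have "\<dots> = (\<Sum>b\<in>Basis. (e \<bullet> b) * f b)" using f by (simp add: linear_sum linear_scale)
    also have "\<dots> = a \<bullet> e"
      unfolding a_def by (simp add: inner_sum_left inner_sum_right mult.commute inner_commute)
    finally show ?thesis .
  qed
  have "negligible {e. a \<bullet> e = c}" by (rule negligible_hyperplane) (use c in simp)
  then have "{e. a \<bullet> e = c} \<in> null_sets lebesgue" by (simp add: negligible_iff_null_sets)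
  moreover have "{e. a \<bullet> e = c} \<in> sets borel" by measurable
  moreover have "{e. f e = c} = {e. a \<bullet> e = c}" using fa by auto
  ultimately show ?thesis using null_sets_completion_iff by (metis sets_lborel)
qed

subsection \<open>The half-open unit cube and the tiling by its integer translates\<close>

definition unit_cube :: "(real ^ 'n::finite) set" where
  "unit_cube = {y. \<forall>i. 0 \<le> y $ i \<and> y $ i < 1}"

lemma unit_cube_borel: "unit_cube \<in> sets borel"
  unfolding unit_cube_def by measurable

lemma One_nth: "(One :: real^'n::finite) $ i = 1"
proof -
  have "axis i (1::real) \<in> (Basis :: (real^'n) set)" unfolding Basis_vec_def by auto
  then have "inner (\<Sum>(Basis :: (real^'n) set)) (axis i 1) = 1" by (rule inner_sum_Basis)
  then show ?thesis by (metis cart_eq_inner_axis)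
qed

text \<open>The unit cube lies between the open and the closed box with corners \<open>0\<close> and \<open>One\<close>.\<close>
lemma emeasure_unit_cube: "emeasure lborel (unit_cube :: (real ^ 'n::finite) set) = 1"
proof -
  have sub: "box 0 One \<subseteq> (unit_cube :: (real ^ 'n) set)" "unit_cube \<subseteq> cbox 0 (One :: real ^ 'n)"
    unfolding unit_cube_def using One_nth[where 'n='n] by (auto simp: mem_box_cart less_imp_le)
  have "emeasure lborel (box 0 (One :: real ^ 'n)) \<le> emeasure lborel (unit_cube :: (real ^ 'n) set)"
    by (rule emeasure_mono[OF sub(1)]) (simp add: unit_cube_borel)
  moreover have "emeasure lborel (unit_cube :: (real ^ 'n) set) \<le> emeasure lborel (cbox 0 (One :: real ^ 'n))"
    by (rule emeasure_mono[OF sub(2)]) simp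
  moreover have "emeasure lborel (box 0 (One :: real ^ 'n)) = 1" "emeasure lborel (cbox 0 (One :: real ^ 'n)) = 1"
    by (simp_all add: emeasure_lborel_box_eq emeasure_lborel_cbox_eq One_nth)
  ultimately show ?thesis by (metis antisym)
qed

lemma unit_cube_pair_borel:
  "(unit_cube \<times> unit_cube :: ((real ^ 'p::finite) \<times> (real ^ 'q::finite)) set) \<in> sets borel"
proof -
  have "(unit_cube::(real^'p) set) \<times> (unit_cube::(real^'q) set) \<in> sets (borel \<Otimes>\<^sub>M borel)"
    by (intro pair_measureI unit_cube_borel)
  then show ?thesis by (simp only: borel_prod)
qed

lemma emeasure_unit_cube_pair:
  "emeasure lborel (unit_cube \<times> unit_cube :: ((real ^ 'p::finite) \<times> (real ^ 'q::finite)) set) = 1"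
proof -
  have "emeasure (lborel \<Otimes>\<^sub>M lborel) (unit_cube \<times> unit_cube :: ((real ^ 'p) \<times> (real ^ 'q)) set) =
        emeasure lborel (unit_cube :: (real ^ 'p) set) * emeasure lborel (unit_cube :: (real ^ 'q) set)"
    by (rule lborel.emeasure_pair_measure_Times) (simp_all add: unit_cube_borel)
  then show ?thesis by (simp add: lborel_prod emeasure_unit_cube)
qed

definition lat :: "('p::finite \<Rightarrow> int) \<times> ('q::finite \<Rightarrow> int) \<Rightarrow> (real ^ 'p) \<times> (real ^ 'q)" where
  "lat ab = (rfun (fst ab), rfun (snd ab))"

definition lat_floor :: "(real ^ 'p::finite) \<times> (real ^ 'q::finite) \<Rightarrow> ('p \<Rightarrow> int) \<times> ('q \<Rightarrow> int)" where
  "lat_floor e = ((\<lambda>i. \<lfloor>fst e $ i\<rfloor>), (\<lambda>j. \<lfloor>snd e $ j\<rfloor>))"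

lemma floor_iff_unit_interval: "(0 \<le> y - real_of_int a \<and> y - real_of_int a < 1) \<longleftrightarrow> a = \<lfloor>y\<rfloor>"
  using floor_eq_iff[of y a] by linarith

lemma unit_cube_shift_iff: "e - lat ab \<in> unit_cube \<times> unit_cube \<longleftrightarrow> ab = lat_floor e"
proof -
  have "e - lat ab \<in> unit_cube \<times> unit_cube \<longleftrightarrow>
          (\<forall>i. fst ab i = \<lfloor>fst e $ i\<rfloor>) \<and> (\<forall>j. snd ab j = \<lfloor>snd e $ j\<rfloor>)"
    unfolding unit_cube_def lat_def by (simp add: mem_Times_iff floor_iff_unit_interval del: diff_ge_0_iff_ge)
  also have "\<dots> \<longleftrightarrow> ab = lat_floor e" unfolding lat_floor_def by (auto simp: prod_eq_iff fun_eq_iff)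
  finally show ?thesis .
qed

text \<open>The integer translates of the unit cube tile \<open>R^p \<times> R^q\<close>: the measure of a Borel set
  is the sum of the measures of its pieces, each moved back into the unit cube.\<close>
lemma lattice_tiling:
  fixes S :: "((real ^ 'p::finite) \<times> (real ^ 'q::finite)) set"
  assumes S: "S \<in> sets borel"
  shows "emeasure lborel S =
           (\<integral>\<^sup>+ab. emeasure lborel {e \<in> unit_cube \<times> unit_cube. lat ab + e \<in> S} \<partial>count_space UNIV)"
proof -
  define T where "T ab = S \<inter> {e. e - lat ab \<in> unit_cube \<times> unit_cube}" for ab
  have T_borel: "T ab \<in> sets borel" for ab
    unfolding T_def using S transl_borel[OF unit_cube_pair_borel] by blast
  have T_index: "ab = lat_floor e" if "e \<in> T ab" for ab e
    using that unfolding T_def by (simp only: Int_iff mem_Collect_eq unit_cube_shift_iff)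
  have "S \<subseteq> (\<Union>ab. T ab)"
  proof
    fix e assume "e \<in> S"
    moreover have "e - lat (lat_floor e) \<in> unit_cube \<times> unit_cube" by (simp only: unit_cube_shift_iff)
    ultimately have "e \<in> T (lat_floor e)" unfolding T_def by (rule IntI[OF _ CollectI])
    then show "e \<in> (\<Union>ab. T ab)" by (rule UN_I[OF UNIV_I])
  qed
  moreover have "(\<Union>ab. T ab) \<subseteq> S" unfolding T_def by blast
  ultimately have S_eq: "S = (\<Union>ab. T ab)" by (rule antisym)
  have "disjoint_family T"
    unfolding disjoint_family_on_def using T_index by blast
  then have "emeasure lborel S = (\<integral>\<^sup>+ab. emeasure lborel (T ab) \<partial>count_space UNIV)"
    unfolding S_eq by (intro emeasure_UN_countable) (auto simp: T_borel)
  also have "\<dots> = (\<integral>\<^sup>+ab. emeasure lborel {e \<in> unit_cube \<times> unit_cube. lat ab + e \<in> S} \<partial>count_space UNIV)"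
  proof (rule nn_integral_cong)
    fix ab
    have "{e. lat ab + e \<in> T ab} = {e \<in> unit_cube \<times> unit_cube. lat ab + e \<in> S}"
      unfolding T_def by auto
    then show "emeasure lborel (T ab) = emeasure lborel {e \<in> unit_cube \<times> unit_cube. lat ab + e \<in> S}"
      using lborel_transl[OF T_borel, of "lat ab" ab] by simp
  qed
  finally show ?thesis .
qed

text \<open>\<open>F = zspan u\<close> and \<open>K = zspan v\<close> are complementary lattices of ranks \<open>p\<close> and \<open>q\<close>, and
  \<open>x 1, \<dots>, x l\<close> represent the cosets of \<open>G = F + K\<close> in \<open>Z^d\<close>.\<close>
locale lattice_decomposition =
  fixes u :: "'p::finite \<Rightarrow> int ^ 'd::finite"
    and v :: "'q::finite \<Rightarrow> int ^ 'd"
    and x :: "nat \<Rightarrow> int ^ 'd"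
    and l :: nat
  assumes dim: "CARD('d) = CARD('p) + CARD('q)"
    and indep_u: "zindep u"
    and indep_v: "zindep v"
    and FK: "zspan u \<inter> zspan v = {0}"
    and cover: "\<forall>s::int ^ 'd. \<exists>k\<in>{1..l}. s - x k \<in> {f + w | f w. f \<in> zspan u \<and> w \<in> zspan v}"
    and distinct: "\<forall>j\<in>{1..l}. \<forall>k\<in>{1..l}.
                    x j - x k \<in> {f + w | f w. f \<in> zspan u \<and> w \<in> zspan v} \<longrightarrow> j = k"
begin

definition G :: "(int ^ 'd) set" where
  "G = {f + w | f w. f \<in> zspan u \<and> w \<in> zspan v}"

definition H :: "(int ^ 'd) set" where
  "H = (\<Union>k\<in>{1..l}. (\<lambda>f. x k + f) ` zspan u)"

lemma G_diff: "a \<in> G \<Longrightarrow> b \<in> G \<Longrightarrow> a - b \<in> G"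
  unfolding G_def
proof clarify
  fix f w f' w' assume "f \<in> zspan u" "w \<in> zspan v" "f' \<in> zspan u" "w' \<in> zspan v"
  then show "\<exists>f'' w''. f + w - (f' + w') = f'' + w'' \<and> f'' \<in> zspan u \<and> w'' \<in> zspan v"
    by (intro exI[of _ "f - f'"] exI[of _ "w - w'"]) (auto simp: zspan_diff algebra_simps)
qed

lemma cover_G: "\<exists>k\<in>{1..l}. s - x k \<in> G"
  using cover unfolding G_def by blast

lemma distinct_G: "j \<in> {1..l} \<Longrightarrow> k \<in> {1..l} \<Longrightarrow> x j - x k \<in> G \<Longrightarrow> j = k"
  using distinct unfolding G_def by blast

lemma l_pos: "l \<ge> 1"
  using cover_G[of 0] by auto

lemma decomp: "\<exists>k\<in>{1..l}. \<exists>f\<in>zspan u. \<exists>w\<in>zspan v. s = x k + f + w"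
proof -
  obtain k where k: "k \<in> {1..l}" "s - x k \<in> G" using cover_G by blast
  then obtain f w where "f \<in> zspan u" "w \<in> zspan v" "s - x k = f + w" unfolding G_def by blast
  then show ?thesis using k by (intro bexI[of _ k] bexI[of _ f] bexI[of _ w]) (auto simp: algebra_simps)
qed

subsection \<open>Counting: the slices of a box are indexed by \<open>H_n\<close>\<close>

lemma H_uniq:
  assumes "t \<in> H" "s - t \<in> zspan v" "t' \<in> H" "s - t' \<in> zspan v"
  shows "t = t'"
proof -
  obtain k f where k: "k \<in> {1..l}" "f \<in> zspan u" "t = x k + f" using assms(1) unfolding H_def by blast
  obtain k' f' where k': "k' \<in> {1..l}" "f' \<in> zspan u" "t' = x k' + f'" using assms(3) unfolding H_def by blast
  have tt: "t - t' \<in> zspan v" using zspan_diff[OF assms(4) assms(2)] by simp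
  have "x k - x k' = (f' - f) + (t - t')" using k k' by (simp add: algebra_simps)
  then have "x k - x k' \<in> G" unfolding G_def using tt zspan_diff[OF k'(2) k(2)] by blast
  then have "k = k'" using distinct_G k k' by blast
  then have "f - f' = t - t'" using k k' by simp
  then have "f - f' \<in> zspan u \<inter> zspan v" using tt zspan_diff[OF k(2) k'(2)] by simp
  then have "f = f'" using FK by simp
  then show ?thesis using k k' \<open>k = k'\<close> by simp
qed

lemma H_exists: "\<exists>t\<in>H. s - t \<in> zspan v"
proof -
  obtain k f w where "k \<in> {1..l}" "f \<in> zspan u" "w \<in> zspan v" "s = x k + f + w" using decomp by blast
  then show ?thesis unfolding H_def by (intro bexI[of _ "x k + f"]) auto
qed

definition proj :: "int ^ 'd \<Rightarrow> int ^ 'd" where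
  "proj s = (THE t. t \<in> H \<and> s - t \<in> zspan v)"

lemma proj: "proj s \<in> H" "s - proj s \<in> zspan v"
proof -
  have "\<exists>!t. t \<in> H \<and> s - t \<in> zspan v" using H_exists H_uniq by blast
  then have "proj s \<in> H \<and> s - proj s \<in> zspan v" unfolding proj_def by (rule theI')
  then show "proj s \<in> H" "s - proj s \<in> zspan v" by auto
qed

lemma Nfun_le: "w \<in> zspan v \<Longrightarrow> Nfun (zspan v) t \<le> supn (t + w)"
  unfolding Nfun_def by (rule Least_le) blast

lemma Nfun_attained: "\<exists>w\<in>zspan v. supn (t + w) = Nfun (zspan v) t"
  unfolding Nfun_def by (rule LeastI_ex) (use zspan_0 in blast)

lemma Hn_eq: "{t\<in>H. Nfun (zspan v) t \<le> n} = proj ` {s. supn s \<le> n}"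
proof (intro equalityI subsetI)
  fix t assume t: "t \<in> {t\<in>H. Nfun (zspan v) t \<le> n}"
  obtain w where w: "w \<in> zspan v" "supn (t + w) = Nfun (zspan v) t" using Nfun_attained by blast
  have "proj (t + w) = t" using H_uniq[of "proj (t + w)" "t + w" t] proj[of "t + w"] t w by simp
  then show "t \<in> proj ` {s. supn s \<le> n}" using t w by (auto intro!: image_eqI[of _ _ "t + w"])
next
  fix t assume "t \<in> proj ` {s. supn s \<le> n}"
  then obtain s where s: "supn s \<le> n" "t = proj s" by blast
  have "Nfun (zspan v) t \<le> supn (t + (s - t))" using Nfun_le proj(2) s by blast
  then show "t \<in> {t\<in>H. Nfun (zspan v) t \<le> n}" using s proj(1) by simp
qed

lemma finite_Hn: "finite {t\<in>H. Nfun (zspan v) t \<le> n}"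
  unfolding Hn_eq by (rule finite_imageI[OF finite_box])

text \<open>The slices \<open>box n \<inter> (t + K)\<close>, \<open>t \<in> H_n\<close>, partition the box.\<close>
lemma sum_mcount: "(\<Sum>t\<in>{t\<in>H. Nfun (zspan v) t \<le> n}. mcount (zspan v) t n) = (2*n+1) ^ CARD('d)"
proof -
  let ?B = "{s::int^'d. supn s \<le> n}"
  let ?A = "\<lambda>t. ?B \<inter> (\<lambda>w. t + w) ` zspan v"
  have "?B = (\<Union>t\<in>{t\<in>H. Nfun (zspan v) t \<le> n}. ?A t)"
  proof (intro equalityI subsetI)
    fix s assume s: "s \<in> ?B"
    then have "proj s \<in> {t\<in>H. Nfun (zspan v) t \<le> n}" unfolding Hn_eq by blast
    moreover have "s \<in> ?A (proj s)" using s proj(2) mem_transl by blast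
    ultimately show "s \<in> (\<Union>t\<in>{t\<in>H. Nfun (zspan v) t \<le> n}. ?A t)" by blast
  qed auto
  moreover have "card (\<Union>t\<in>{t\<in>H. Nfun (zspan v) t \<le> n}. ?A t)
      = (\<Sum>t\<in>{t\<in>H. Nfun (zspan v) t \<le> n}. card (?A t))"
    by (rule card_UN_disjoint) (use finite_Hn finite_box H_uniq mem_transl in blast)+
  ultimately show ?thesis unfolding mcount_def using card_box[of n, where 'd='d] by simp
qed

text \<open>Hence the normalised sum of the theorem equals \<open>(2 + 1/n)^d\<close> and tends to \<open>2^d\<close>.\<close>
lemma normalised_sum_limit:
  "(\<lambda>n::nat. (1 / real n ^ CARD('p)) *
      (\<Sum>t\<in>{t\<in>H. Nfun (zspan v) t \<le> n}. real (mcount (zspan v) t n) / real n ^ CARD('q)))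
    \<longlonglongrightarrow> 2 ^ CARD('d)"
proof -
  have "(\<lambda>n::nat. (2 + 1 / real n) ^ CARD('d)) \<longlonglongrightarrow> (2 + 0) ^ CARD('d)"
    by (intro tendsto_intros)
  moreover have "\<forall>\<^sub>F n in sequentially. (2 + 1 / real n) ^ CARD('d) =
      (1 / real n ^ CARD('p)) * (\<Sum>t\<in>{t\<in>H. Nfun (zspan v) t \<le> n}. real (mcount (zspan v) t n) / real n ^ CARD('q))"
    using eventually_ge_at_top[of "1::nat"]
  proof eventually_elim
    case (elim n)
    have "real n ^ CARD('q) * real n ^ CARD('p) = real n ^ CARD('d)"
      by (simp add: dim add.commute flip: power_add)
    then have "(1 / real n ^ CARD('p)) *
            (\<Sum>t\<in>{t\<in>H. Nfun (zspan v) t \<le> n}. real (mcount (zspan v) t n) / real n ^ CARD('q))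
        = real (\<Sum>t\<in>{t\<in>H. Nfun (zspan v) t \<le> n}. mcount (zspan v) t n) / real n ^ CARD('d)"
      by (simp add: sum_divide_distrib)
    also have "\<dots> = (2 * real n + 1) ^ CARD('d) / real n ^ CARD('d)"
      unfolding sum_mcount by (simp add: add.commute)
    also have "\<dots> = ((2 * real n + 1) / real n) ^ CARD('d)"
      by (rule power_divide[symmetric])
    also have "(2 * real n + 1) / real n = 2 + 1 / real n"
      using elim by (simp add: field_simps)
    finally show ?case by simp
  qed
  ultimately show ?thesis by (simp add: Lim_transform_eventually)
qed

end

subsection \<open>The linear map \<open>L(y, lam) = U y + V lam\<close> is a bijection\<close>

context lattice_decomposition
begin

definition LL :: "(real ^ 'p) \<times> (real ^ 'q) \<Rightarrow> real ^ 'd" where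
  "LL e = colmat u *v fst e + colmat v *v snd e"

lemma linear_LL: "linear LL"
  unfolding LL_def
  by (intro linearI) (auto simp: matrix_vector_right_distrib scaleR_right_distrib matrix_vector_mult_scaleR)

definition gm :: "('p \<Rightarrow> int) \<times> ('q \<Rightarrow> int) \<Rightarrow> int ^ 'd" where
  "gm ab = (\<Sum>i\<in>UNIV. fst ab i *s u i) + (\<Sum>j\<in>UNIV. snd ab j *s v j)"

lemma LL_lat: "LL (lat ab) = rvec (gm ab)"
  by (simp add: LL_def lat_def gm_def colmat_rfun rvec_add)

lemma G_gm: "g \<in> G \<longleftrightarrow> (\<exists>ab. g = gm ab)"
proof
  assume "g \<in> G"
  then obtain c d where "g = (\<Sum>i\<in>UNIV. c i *s u i) + (\<Sum>j\<in>UNIV. d j *s v j)"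
    unfolding G_def zspan_def by blast
  then show "\<exists>ab. g = gm ab" unfolding gm_def by (intro exI[of _ "(c, d)"]) simp
qed (auto simp: G_def gm_def intro: zspan_sum)

text \<open>The coordinates of a point of \<open>G\<close> are unique, since \<open>F \<inter> K = 0\<close>.\<close>
lemma gm_inj: "gm ab = gm ab' \<Longrightarrow> ab = ab'"
proof -
  assume eq: "gm ab = gm ab'"
  define f1 where "f1 = (\<Sum>i\<in>UNIV. fst ab i *s u i)"
  define f2 where "f2 = (\<Sum>i\<in>UNIV. fst ab' i *s u i)"
  define w1 where "w1 = (\<Sum>j\<in>UNIV. snd ab j *s v j)"
  define w2 where "w2 = (\<Sum>j\<in>UNIV. snd ab' j *s v j)"
  have e: "f1 - f2 = w2 - w1" using eq unfolding gm_def f1_def f2_def w1_def w2_def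
    by (simp add: algebra_simps)
  have "f1 - f2 \<in> zspan u" "w2 - w1 \<in> zspan v"
    unfolding f1_def f2_def w1_def w2_def by (intro zspan_diff zspan_sum)+
  then have "f1 - f2 \<in> zspan u \<inter> zspan v" using e by simp
  then have "f1 - f2 = 0" using FK by blast
  then have "f1 = f2" "w1 = w2" using e by simp_all
  then have "fst ab = fst ab'" "snd ab = snd ab'"
    unfolding f1_def f2_def w1_def w2_def
    using zindep_unique[OF indep_u] zindep_unique[OF indep_v] by blast+
  then show "ab = ab'" by (simp add: prod_eq_iff)
qed

text \<open>Finite index: by pigeonhole two of the multiples \<open>1 z, \<dots>, (l+1) z\<close> lie in the same
  coset of \<open>G\<close>, so a nonzero multiple of \<open>z\<close> lies in \<open>G\<close>.\<close>
lemma mult_in_G: "\<exists>m::int. m \<noteq> 0 \<and> m *s z \<in> G"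
proof -
  define \<phi> where "\<phi> a = (SOME k. k \<in> {1..l} \<and> (int a) *s z - x k \<in> G)" for a :: nat
  have \<phi>: "\<phi> a \<in> {1..l} \<and> (int a) *s z - x (\<phi> a) \<in> G" for a
    unfolding \<phi>_def by (rule someI_ex) (use cover_G in blast)
  have "\<phi> ` {1..l+1} \<subseteq> {1..l}" using \<phi> by auto
  then have "card (\<phi> ` {1..l+1}) \<le> l" using card_mono[of "{1..l}"] by fastforce
  then have "\<not> inj_on \<phi> {1..l+1}" using card_image by fastforce
  then obtain a b where ab: "a \<in> {1..l+1}" "b \<in> {1..l+1}" "a \<noteq> b" "\<phi> a = \<phi> b"
    unfolding inj_on_def by blast
  have "(int a) *s z - x (\<phi> a) - ((int b) *s z - x (\<phi> a)) \<in> G"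
    using G_diff \<phi>[of a] \<phi>[of b] ab(4) by metis
  moreover have "(int a) *s z - x (\<phi> a) - ((int b) *s z - x (\<phi> a)) = (int a - int b) *s z"
    by (simp add: vec_eq_iff algebra_simps)
  ultimately show ?thesis using ab(3) by (intro exI[of _ "int a - int b"]) auto
qed

lemma rvec_in_range_LL: "\<exists>e. LL e = rvec z"
proof -
  obtain m where m: "m \<noteq> 0" "m *s z \<in> G" using mult_in_G by blast
  then obtain ab where ab: "m *s z = gm ab" using G_gm by blast
  have "LL ((1 / real_of_int m) *\<^sub>R lat ab) = (1 / real_of_int m) *\<^sub>R rvec (m *s z)"
    using linear_LL by (simp add: linear_scale LL_lat ab)
  also have "\<dots> = rvec z" using m by (simp add: rvec_smult)
  finally show ?thesis by blast
qed

text \<open>The range of \<open>L\<close> is a subspace containing the standard basis.\<close>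
lemma LL_surj: "surj LL"
proof -
  have "subspace (range LL)" using linear_subspace_image[OF linear_LL subspace_UNIV] by simp
  moreover have "Basis \<subseteq> range LL"
  proof
    fix b :: "real^'d" assume "b \<in> Basis"
    then obtain i where "b = axis i 1" by (auto simp: Basis_vec_def)
    then have "b = rvec (axis i 1)" by (simp add: vec_eq_iff axis_def)
    then show "b \<in> range LL" using rvec_in_range_LL by (metis rangeI)
  qed
  ultimately have "span Basis \<subseteq> range LL" by (metis span_minimal)
  then show ?thesis by auto
qed

text \<open>A surjective linear map between spaces of equal dimension \<open>p + q = d\<close> is injective.\<close>
lemma LL_inj: "inj LL"
proof -
  have P: "finite_dimensional_vector_space_pair (scaleR::_\<Rightarrow>_\<Rightarrow>(real^'p) \<times> (real^'q)) Basis
             (scaleR::_\<Rightarrow>_\<Rightarrow>real^'d) Basis"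
    by unfold_locales
  show ?thesis
    by (rule finite_dimensional_vector_space_pair.linear_surjective_imp_injective[OF P])
      (use linear_LL LL_surj dim in \<open>auto simp: linear_def[symmetric] dim_raw_def[symmetric] dim_UNIV\<close>)
qed

subsection \<open>The uniform bound on \<open>m(t,n)\<close>\<close>

text \<open>Since \<open>L\<close> has a bounded linear inverse, the \<open>v\<close>-coordinates of an integer vector are
  bounded by a constant times its sup-norm.\<close>
lemma coeff_bound:
  "\<exists>M\<ge>0. \<forall>c n j. supn (\<Sum>j\<in>UNIV. c j *s v j) \<le> n \<longrightarrow> real_of_int \<bar>c j\<bar> \<le> M * real n"
proof -
  obtain g where g: "linear g" "g \<circ> LL = id"
    using linear_injective_left_inverse[OF linear_LL LL_inj] by blast
  then have "bounded_linear g" by (simp add: linear_conv_bounded_linear)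
  then obtain B where B: "B > 0" "\<And>w. norm (g w) \<le> norm w * B"
    using bounded_linear.pos_bounded by blast
  have "real_of_int \<bar>c j\<bar> \<le> (B * real CARD('d)) * real n"
    if n: "supn (\<Sum>j\<in>UNIV. c j *s v j) \<le> n" for c n j
  proof -
    define w where "w = (\<Sum>j\<in>UNIV. c j *s v j)"
    have "LL (0, rfun c) = rvec w"
        by (simp add: LL_def colmat_rfun w_def)
    then have inv: "(0, rfun c) = g (rvec w)" using g(2) by (metis comp_apply id_apply)
    have "real_of_int \<bar>c j\<bar> = \<bar>rfun c $ j\<bar>" by simp
    also have "\<dots> \<le> norm (rfun c)" by (rule component_le_norm_cart)
    also have "\<dots> \<le> norm ((0::real^'p), rfun c)" by (rule norm_snd_le)
    also have "\<dots> \<le> norm (rvec w) * B" using inv B(2) by metis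
    also have "\<dots> \<le> (\<Sum>i\<in>UNIV. \<bar>rvec w $ i\<bar>) * B"
      using B(1) norm_le_l1_cart[of "rvec w"] by (intro mult_right_mono) auto
    also have "\<dots> \<le> (\<Sum>i\<in>(UNIV::'d set). real n) * B"
    proof (intro mult_right_mono sum_mono)
      fix i
      have "\<bar>w $ i\<bar> \<le> int n" using n supn_le_iff unfolding w_def by blast
      then show "\<bar>rvec w $ i\<bar> \<le> real n" by (metis of_int_abs of_int_le_iff of_int_of_nat_eq rvec_nth)
    qed (use B(1) in simp)
    finally show ?thesis by (simp add: algebra_simps)
  qed
  moreover have "B * real CARD('d) \<ge> 0" using B(1) by simp
  ultimately show ?thesis by blast
qed

lemma mcount_bound: "\<exists>\<kappa>>0. \<forall>t. \<forall>n::nat\<ge>1. real (mcount (zspan v) t n) \<le> \<kappa> * real n ^ CARD('q)"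
proof -
  obtain M where M: "M \<ge> 0" "\<forall>c n j. supn (\<Sum>j\<in>UNIV. c j *s v j) \<le> n \<longrightarrow> real_of_int \<bar>c j\<bar> \<le> M * real n"
    using coeff_bound by blast
  have "real (mcount (zspan v) t n) \<le> (4 * M + 1) ^ CARD('q) * real n ^ CARD('q)" if "n \<ge> 1" for t n
    using mcount_le[OF M(2) M(1) that] by (simp add: power_mult_distrib)
  moreover have "(4 * M + 1) ^ CARD('q) > 0" using M(1) by simp
  ultimately show ?thesis by blast
qed

end

subsection \<open>The volume of \<open>L^-1 [-1,1]^d\<close>\<close>

definition cell :: "int ^ 'n::finite \<Rightarrow> (real ^ 'n) set" where
  "cell z = {w. w + rvec z \<in> unit_cube}"

definition cell_index :: "real ^ 'n::finite \<Rightarrow> int ^ 'n" where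
  "cell_index w = (\<chi> i. - \<lfloor>w $ i\<rfloor>)"

lemma cell_borel: "cell z \<in> sets borel"
  unfolding cell_def unit_cube_def by measurable

lemma mem_cell: "w \<in> cell z \<longleftrightarrow> z = cell_index w"
proof -
  have "(0 \<le> w $ i + real_of_int (z $ i) \<and> w $ i + real_of_int (z $ i) < 1) \<longleftrightarrow> z $ i = - \<lfloor>w $ i\<rfloor>" for i
    using floor_eq_iff[of "w $ i" "- z $ i"] by auto
  then show ?thesis unfolding cell_def unit_cube_def cell_index_def by (auto simp: vec_eq_iff)
qed

context lattice_decomposition
begin

lemma LL_vimage: "X \<in> sets borel \<Longrightarrow> LL -` X \<in> sets borel"
proof -
  have "LL \<in> borel_measurable borel"
    using linear_LL by (intro borel_measurable_continuous_onI linear_continuous_on)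
      (simp add: linear_conv_bounded_linear)
  then show "X \<in> sets borel \<Longrightarrow> LL -` X \<in> sets borel" by (rule measurable_sets_borel)
qed

text \<open>All cells have preimages of the same volume, as \<open>L\<close> is onto and Lebesgue measure is
  translation invariant.\<close>
lemma emeasure_LL_cell: "emeasure lborel (LL -` cell z) = emeasure lborel (LL -` unit_cube)"
proof -
  obtain e0 where e0: "LL e0 = rvec z" using rvec_in_range_LL by blast
  have "LL -` cell z = {e. e0 + e \<in> LL -` unit_cube}"
    using e0 linear_add[OF linear_LL] unfolding cell_def by (auto simp: add.commute)
  then show ?thesis using lborel_transl[OF LL_vimage[OF unit_cube_borel], of e0] by simp
qed

definition piece :: "nat \<Rightarrow> ('p \<Rightarrow> int) \<times> ('q \<Rightarrow> int) \<Rightarrow> ((real ^ 'p) \<times> (real ^ 'q)) set" where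
  "piece k ab = (unit_cube \<times> unit_cube) \<inter> LL -` cell (x k + gm ab)"

lemma piece_borel: "piece k ab \<in> sets borel"
  unfolding piece_def using unit_cube_pair_borel LL_vimage[OF cell_borel] by blast

lemma piece_cell: "e \<in> piece k ab \<Longrightarrow> x k + gm ab = cell_index (LL e)"
  unfolding piece_def by (simp add: mem_cell)

text \<open>Moving the lattice translates of \<open>L^-1(cell (x k))\<close> back into the unit cube gives the
  pieces belonging to the coset \<open>x k + G\<close>.\<close>
lemma emeasure_LL_cell_x:
  "emeasure lborel (LL -` cell (x k)) = emeasure lborel (\<Union>ab. piece k ab)"
proof -
  have shift: "{e \<in> unit_cube \<times> unit_cube. LL (lat ab + e) \<in> cell (x k)} = piece k ab" for ab
  proof -
    have "LL (lat ab + e) \<in> cell (x k) \<longleftrightarrow> LL e \<in> cell (x k + gm ab)" for e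
      unfolding cell_def using linear_add[OF linear_LL, of "lat ab" e]
      by (simp add: LL_lat rvec_add algebra_simps)
    then show ?thesis unfolding piece_def by auto
  qed
  have "disjoint_family (piece k)"
    unfolding disjoint_family_on_def using piece_cell gm_inj by (metis add_left_cancel disjoint_iff)
  then have "emeasure lborel (\<Union>ab. piece k ab) = (\<integral>\<^sup>+ab. emeasure lborel (piece k ab) \<partial>count_space UNIV)"
    by (intro emeasure_UN_countable) (auto simp: piece_borel)
  also have "\<dots> = emeasure lborel (LL -` cell (x k))"
    using lattice_tiling[OF LL_vimage[OF cell_borel], of "x k"] by (simp add: shift)
  finally show ?thesis by simp
qed

text \<open>The pieces of all cosets tile the unit cube, so \<open>l \<cdot> vol(L^-1 [0,1)^d) = 1\<close>.\<close>
lemma l_times_emeasure_LL_unit_cube: "of_nat l * emeasure lborel (LL -` unit_cube) = 1"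
proof -
  define W where "W k = (\<Union>ab. piece k ab)" for k
  have W_borel: "W k \<in> sets borel" for k
    unfolding W_def by (rule sets.countable_UN'') (auto simp: piece_borel)
  have disj: "disjoint_family_on W {1..l}"
    unfolding disjoint_family_on_def
  proof (intro ballI impI)
    fix k k' assume k: "k \<in> {1..l}" "k' \<in> {1..l}" and ne: "k \<noteq> k'"
    show "W k \<inter> W k' = {}"
    proof (rule ccontr)
      assume "W k \<inter> W k' \<noteq> {}"
      then obtain e ab ab' where "e \<in> piece k ab" "e \<in> piece k' ab'" unfolding W_def by blast
      then have "x k + gm ab = x k' + gm ab'" using piece_cell by metis
      then have "x k - x k' = gm ab' - gm ab" by (simp add: algebra_simps)
      moreover have "gm ab' - gm ab \<in> G" using G_gm G_diff by blast
      ultimately show False using distinct_G k ne by simp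
    qed
  qed
  have cover: "(\<Union>k\<in>{1..l}. W k) = unit_cube \<times> unit_cube"
  proof (intro equalityI subsetI)
    fix e :: "(real ^ 'p) \<times> (real ^ 'q)" assume e: "e \<in> unit_cube \<times> unit_cube"
    obtain k f w where kfw: "k \<in> {1..l}" "f \<in> zspan u" "w \<in> zspan v" "cell_index (LL e) = x k + f + w"
      using decomp by blast
    then obtain a b where "f = (\<Sum>i\<in>UNIV. a i *s u i)" "w = (\<Sum>j\<in>UNIV. b j *s v j)"
      unfolding zspan_def by blast
    then have "cell_index (LL e) = x k + gm (a, b)" using kfw(4) by (simp add: gm_def add.assoc)
    then have "LL e \<in> cell (x k + gm (a, b))" by (simp only: mem_cell)
    then have "e \<in> W k" unfolding W_def piece_def using e by blast
    then show "e \<in> (\<Union>k\<in>{1..l}. W k)" using kfw(1) by blast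
  qed (auto simp: W_def piece_def)
  have "(\<Sum>k\<in>{1..l}. emeasure lborel (W k)) = emeasure lborel (\<Union>k\<in>{1..l}. W k)"
    by (rule sum_emeasure) (use W_borel disj in auto)
  then have "(\<Sum>k\<in>{1..l}. emeasure lborel (W k)) = 1"
    unfolding cover emeasure_unit_cube_pair .
  moreover have "emeasure lborel (W k) = emeasure lborel (LL -` unit_cube)" for k
    unfolding W_def using emeasure_LL_cell_x[of k] emeasure_LL_cell[of "x k"] by simp
  ultimately show ?thesis by simp
qed

lemma emeasure_LL_unit_cube: "emeasure lborel (LL -` unit_cube) = ennreal (1 / real l)"
proof -
  have "ennreal (1 / real l) = ennreal (1 / real l) * (of_nat l * emeasure lborel (LL -` unit_cube))"
    using l_times_emeasure_LL_unit_cube by simp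
  also have "\<dots> = (ennreal (1 / real l) * ennreal (real l)) * emeasure lborel (LL -` unit_cube)"
    by (simp add: ennreal_of_nat_eq_real_of_nat mult.assoc)
  also have "ennreal (1 / real l) * ennreal (real l) = 1"
    using l_pos by (simp add: ennreal_mult''[symmetric])
  finally show ?thesis by simp
qed

text \<open>The half-open cube \<open>[-1,1)^d\<close> is the union of the \<open>2^d\<close> cells with indices in \<open>{0,1}^d\<close>.\<close>
lemma emeasure_LL_half_open_cube:
  "emeasure lborel (LL -` {w. \<forall>i. -1 \<le> w $ i \<and> w $ i < 1}) = 2 ^ CARD('d) * emeasure lborel (LL -` unit_cube)"
proof -
  define Zs where "Zs = {z::int^'d. \<forall>i. z $ i \<in> {0,1}}"
  have card_Zs: "card Zs = 2 ^ CARD('d)"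
    unfolding Zs_def using card_vecset[of "{0::int,1}", where 'n='d] by (simp add: numeral_2_eq_2)
  then have "finite Zs" by (intro card_ge_0_finite) simp
  have "{w::real^'d. \<forall>i. -1 \<le> w $ i \<and> w $ i < 1} = (\<Union>z\<in>Zs. cell z)"
  proof (intro equalityI subsetI)
    fix w :: "real^'d" assume w: "w \<in> {w. \<forall>i. -1 \<le> w $ i \<and> w $ i < 1}"
    have "\<lfloor>w $ i\<rfloor> = -1 \<or> \<lfloor>w $ i\<rfloor> = 0" for i
    proof -
      have "-1 \<le> w $ i" "w $ i < 1" using w by auto
      then show ?thesis by linarith
    qed
    then have "cell_index w \<in> Zs" unfolding Zs_def cell_index_def by auto
    moreover have "w \<in> cell (cell_index w)" by (simp only: mem_cell)
    ultimately show "w \<in> (\<Union>z\<in>Zs. cell z)" by blast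
  next
    fix w assume "w \<in> (\<Union>z\<in>Zs. cell z)"
    then obtain z where z: "z \<in> Zs" "w + rvec z \<in> unit_cube" unfolding cell_def by blast
    have "-1 \<le> w $ i \<and> w $ i < 1" for i
    proof -
      have "z $ i = 0 \<or> z $ i = 1" using z(1) unfolding Zs_def by auto
      moreover have "0 \<le> w $ i + real_of_int (z $ i)" "w $ i + real_of_int (z $ i) < 1"
        using z(2) unfolding unit_cube_def by auto
      ultimately show ?thesis by auto
    qed
    then show "w \<in> {w. \<forall>i. -1 \<le> w $ i \<and> w $ i < 1}" by simp
  qed
  then have "LL -` {w. \<forall>i. -1 \<le> w $ i \<and> w $ i < 1} = (\<Union>z\<in>Zs. LL -` cell z)" by auto
  moreover have "emeasure lborel (\<Union>z\<in>Zs. LL -` cell z) = (\<Sum>z\<in>Zs. emeasure lborel (LL -` cell z))"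
    by (rule sum_emeasure[symmetric])
      (use \<open>finite Zs\<close> LL_vimage[OF cell_borel] in \<open>auto simp: disjoint_family_on_def mem_cell\<close>)
  ultimately show ?thesis using card_Zs by (simp add: emeasure_LL_cell)
qed

text \<open>The closed cube differs from the half-open one by finitely many hyperplanes, whose
  preimages are null sets; so \<open>vol(L^-1 [-1,1]^d) = 2^d / l\<close>.\<close>
lemma emeasure_LL_cube: "emeasure lborel {e. infnorm (LL e) \<le> 1} = ennreal (2 ^ CARD('d) / real l)"
proof -
  define HC where "HC = {w::real^'d. \<forall>i. -1 \<le> w $ i \<and> w $ i < 1}"
  define N where "N = (\<Union>i. {e. LL e $ i = 1})"
  have "linear (\<lambda>e. LL e $ i)" for i
    by (intro linearI) (simp_all add: linear_add[OF linear_LL] linear_scale[OF linear_LL])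
  then have N: "N \<in> null_sets lborel"
    unfolding N_def by (intro null_sets_UN') (auto intro: null_level_set)
  have closed: "{e. infnorm (LL e) \<le> 1} \<in> sets borel"
  proof -
    have "{w::real^'d. infnorm w \<le> 1} \<in> sets borel"
      by (intro borel_closed closed_Collect_le continuous_intros continuous_on_infnorm)
    from LL_vimage[OF this] show ?thesis by (simp add: vimage_def)
  qed
  have HC_borel: "HC \<in> sets borel" unfolding HC_def by measurable
  have sub: "LL -` HC \<subseteq> {e. infnorm (LL e) \<le> 1}"
    unfolding HC_def by (auto simp: infnorm_le1_cart abs_le_iff less_imp_le)
  have "{e. infnorm (LL e) \<le> 1} - LL -` HC \<subseteq> N"
  proof
    fix e assume e: "e \<in> {e. infnorm (LL e) \<le> 1} - LL -` HC"
    then have "\<forall>i. \<bar>LL e $ i\<bar> \<le> 1" by (simp add: infnorm_le1_cart)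
    moreover have "\<not> (\<forall>i. -1 \<le> LL e $ i \<and> LL e $ i < 1)" using e unfolding HC_def by simp
    ultimately obtain i where "LL e $ i = 1" by (auto simp: abs_le_iff) (meson linorder_not_le order_antisym_conv)
    then show "e \<in> N" unfolding N_def by blast
  qed
  then have "{e. infnorm (LL e) \<le> 1} - LL -` HC \<in> null_sets lborel"
    using null_sets_subset[OF N] closed LL_vimage[OF HC_borel] by auto
  then have "emeasure lborel (LL -` HC \<union> ({e. infnorm (LL e) \<le> 1} - LL -` HC)) = emeasure lborel (LL -` HC)"
    by (rule emeasure_Un_null_set[rotated]) (use LL_vimage[OF HC_borel] in simp)
  moreover have "LL -` HC \<union> ({e. infnorm (LL e) \<le> 1} - LL -` HC) = {e. infnorm (LL e) \<le> 1}"
    using sub by blast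
  ultimately have "emeasure lborel {e. infnorm (LL e) \<le> 1} = emeasure lborel (LL -` HC)"
    by simp
  also have "\<dots> = ennreal (2 ^ CARD('d)) * ennreal (1 / real l)"
    unfolding HC_def emeasure_LL_half_open_cube emeasure_LL_unit_cube
    by (simp add: ennreal_power[symmetric])
  also have "\<dots> = ennreal (2 ^ CARD('d) / real l)"
    by (simp add: ennreal_mult[symmetric])
  finally show ?thesis .
qed

text \<open>By Fubini, \<open>\<integral>_C V(y) dy\<close> is the volume of \<open>L^-1 [-1,1]^d\<close>.\<close>
lemma integral_CV:
  "(\<integral>\<^sup>+ y. indicator (Cset (colmat u) (colmat v)) y * Vol (colmat u) (colmat v) y \<partial>lborel)
     = ennreal (2 ^ CARD('d) / real l)"
proof -
  define S where "S = {e. infnorm (LL e) \<le> 1}"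
  have S_borel: "S \<in> sets borel"
  proof -
    have "{w::real^'d. infnorm w \<le> 1} \<in> sets borel"
      by (intro borel_closed closed_Collect_le continuous_intros continuous_on_infnorm)
    from LL_vimage[OF this] show ?thesis unfolding S_def by (simp add: vimage_def)
  qed
  have P: "Pair y -` S = Pset (colmat u) (colmat v) y" for y
    unfolding S_def Pset_def LL_def by auto
  have I: "indicator (Cset (colmat u) (colmat v)) y * Vol (colmat u) (colmat v) y
             = emeasure lborel (Pair y -` S)" for y
  proof (cases "y \<in> Cset (colmat u) (colmat v)")
    case True
    then show ?thesis unfolding Vol_def P by simp
  next
    case False
    then have "Pset (colmat u) (colmat v) y = {}" unfolding Cset_def Pset_def by auto
    then show ?thesis using False unfolding Vol_def P by simp
  qed
  have "emeasure lborel S = emeasure (lborel \<Otimes>\<^sub>M lborel) S" by (simp only: lborel_prod)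
  also have "\<dots> = (\<integral>\<^sup>+ y. emeasure lborel (Pair y -` S) \<partial>lborel)"
    by (rule lborel.emeasure_pair_measure_alt) (use S_borel in \<open>simp only: lborel_prod sets_lborel\<close>)
  finally show ?thesis using emeasure_LL_cube I unfolding S_def by simp
qed

end

theorem lemma5p1:
  fixes u :: "'p::finite \<Rightarrow> int ^ 'd::finite"
    and v :: "'q::finite \<Rightarrow> int ^ 'd"
    and x :: "nat \<Rightarrow> int ^ 'd"
    and l :: nat
  assumes dim: "CARD('d) = CARD('p) + CARD('q)"
    and indep_u: "zindep u"
    and indep_v: "zindep v"
    and FK: "zspan u \<inter> zspan v = {0}"
    and cover: "\<forall>s::int ^ 'd. \<exists>k\<in>{1..l}. s - x k \<in> {f + w | f w. f \<in> zspan u \<and> w \<in> zspan v}"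
    and distinct: "\<forall>j\<in>{1..l}. \<forall>k\<in>{1..l}.
                    x j - x k \<in> {f + w | f w. f \<in> zspan u \<and> w \<in> zspan v} \<longrightarrow> j = k"
  shows "(\<exists>\<kappa>0>0. \<forall>t\<in>(\<Union>k\<in>{1..l}. (\<lambda>f. x k + f) ` zspan u). \<forall>n::nat\<ge>1.
            real (mcount (zspan v) t n) / real n ^ CARD('q) \<le> \<kappa>0)
       \<and> (\<integral>\<^sup>+ y. indicator (Cset (colmat u) (colmat v)) y * Vol (colmat u) (colmat v) y \<partial>lborel) < \<infinity>
       \<and> (\<lambda>n::nat. (1 / real n ^ CARD('p)) *
             (\<Sum>t\<in>{t\<in>(\<Union>k\<in>{1..l}. (\<lambda>f. x k + f) ` zspan u). Nfun (zspan v) t \<le> n}.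
                 real (mcount (zspan v) t n) / real n ^ CARD('q)))
          \<longlonglongrightarrow> real l * enn2real (\<integral>\<^sup>+ y. indicator (Cset (colmat u) (colmat v)) y
                                           * Vol (colmat u) (colmat v) y \<partial>lborel)"
proof -
  interpret lattice_decomposition u v x l
    using dim indep_u indep_v FK cover distinct by unfold_locales
  obtain \<kappa> where \<kappa>: "\<kappa> > 0" "\<forall>t. \<forall>n::nat\<ge>1. real (mcount (zspan v) t n) \<le> \<kappa> * real n ^ CARD('q)"
    using mcount_bound by blast
  have bound: "\<exists>\<kappa>0>0. \<forall>t\<in>H. \<forall>n::nat\<ge>1. real (mcount (zspan v) t n) / real n ^ CARD('q) \<le> \<kappa>0"
    using \<kappa> by (intro exI[of _ \<kappa>]) (simp add: divide_le_eq)
  have "real l * enn2real (ennreal (2 ^ CARD('d) / real l)) = 2 ^ CARD('d)"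
    using l_pos by simp
  then show ?thesis
    using bound integral_CV normalised_sum_limit unfolding H_def by simp
qed

end
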